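(* Let $\pi_+\in(0,1)$, $\pi_-=1-\pi_+$, let $p_+,p_-$ be densities on $\mathcal{X}$ and $\widetilde{p}_+=\frac{\pi_+p_++\pi_-^2p_-}{\pi_-^2+\pi_+}$, $\widetilde{p}_-=\frac{\pi_+^2p_++\pi_-p_-}{\pi_+^2+\pi_-}$. Let $\ell:\mathbb{R}\times\{+1,-1\}\to\mathbb{R}_+$ be a loss, $\mathcal{F}$ a class of functions $\mathcal{X}\to\mathbb{R}$, and let $\boldsymbol{x}_1,\dots,\boldsymbol{x}_n,\boldsymbol{x}_1',\dots,\boldsymbol{x}_n'\in\mathcal{X}$ be given points. Define $R(f)=\pi_+\mathbb{E}_{p_+}[\ell(f(\boldsymbol{x}),+1)]+\pi_-\mathbb{E}_{p_-}[\ell(f(\boldsymbol{x}),-1)]$, $$R^+_{\mathrm{PC}}(f)=\mathbb{E}_{\widetilde{p}_+(\boldsymbol{x})}[\ell(f(\boldsymbol{x}),+1)-\pi_+\ell(f(\boldsymbol{x}),-1)],\quad \widehat{R}^+_{\mathrm{PC}}(f)=\frac1n\sum_{i=1}^n\big(\ell(f(\boldsymbol{x}_i),+1)-\pi_+\ell(f(\boldsymbol{x}_i),-1)\big),$$ $$R^-_{\mathrm{PC}}(f)=\mathbb{E}_{\widetilde{p}_-(\boldsymbol{x}')}[\ell(f(\boldsymbol{x}'),-1)-\pi_-\ell(f(\boldsymbol{x}'),+1)],\quad \widehat{R}^-_{\mathrm{PC}}(f)=\frac1n\sum_{i=1}^n\big(\ell(f(\boldsymbol{x}_i'),-1)-\pi_-\ell(f(\boldsymbol{x}_i'),+1)\big),$$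 $\widehat{R}_{\mathrm{PC}}=\widehat{R}^+_{\mathrm{PC}}+\widehat{R}^-_{\mathrm{PC}}$, $\widehat{f}_{\mathrm{PC}}\in\arg\min_{f\in\mathcal{F}}\widehat{R}_{\mathrm{PC}}(f)$ and $f^\star\in\arg\min_{f\in\mathcal{F}}R(f)$. Then $$R(\widehat{f}_{\mathrm{PC}})-R(f^\star)\le2\sup_{f\in\mathcal{F}}\big|R^+_{\mathrm{PC}}(f)-\widehat{R}^+_{\mathrm{PC}}(f)\big|+2\sup_{f\in\mathcal{F}}\big|R^-_{\mathrm{PC}}(f)-\widehat{R}^-_{\mathrm{PC}}(f)\big|.$$
   Context: $\pi_\pm$ are class priors and $p_\pm$ class-conditional densities of a binary classification problem; $\widetilde{p}_\pm$ are the marginals of the first/second components of pairwise comparison data, and in the intended application $\boldsymbol{x}_i\sim\widetilde{p}_+$, $\boldsymbol{x}_i'\sim\widetilde{p}_-$. *)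

theory Defs
  imports "HOL-Analysis.Analysis"
begin

definition expect_dens :: "'a measure \<Rightarrow> ('a \<Rightarrow> real) \<Rightarrow> ('a \<Rightarrow> real) \<Rightarrow> real" where
  "expect_dens M p g = (\<integral>x. g x * p x \<partial>M)"

definition is_density :: "'a measure \<Rightarrow> ('a \<Rightarrow> real) \<Rightarrow> bool" where
  "is_density M p \<longleftrightarrow> p \<in> borel_measurable M \<and> (\<forall>x\<in>space M. 0 \<le> p x)
      \<and> integrable M p \<and> (\<integral>x. p x \<partial>M) = 1"

definition ptilde_pos :: "real \<Rightarrow> ('a \<Rightarrow> real) \<Rightarrow> ('a \<Rightarrow> real) \<Rightarrow> 'a \<Rightarrow> real" where
  "ptilde_pos \<pi> pp pn x = (\<pi> * pp x + (1 - \<pi>)^2 * pn x) / ((1 - \<pi>)^2 + \<pi>)"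

definition ptilde_neg :: "real \<Rightarrow> ('a \<Rightarrow> real) \<Rightarrow> ('a \<Rightarrow> real) \<Rightarrow> 'a \<Rightarrow> real" where
  "ptilde_neg \<pi> pp pn x = (\<pi>^2 * pp x + (1 - \<pi>) * pn x) / (\<pi>^2 + (1 - \<pi>))"

definition risk :: "'a measure \<Rightarrow> real \<Rightarrow> ('a \<Rightarrow> real) \<Rightarrow> ('a \<Rightarrow> real)
    \<Rightarrow> (real \<Rightarrow> real \<Rightarrow> real) \<Rightarrow> ('a \<Rightarrow> real) \<Rightarrow> real" where
  "risk M \<pi> pp pn L f = \<pi> * expect_dens M pp (\<lambda>x. L (f x) 1)
      + (1 - \<pi>) * expect_dens M pn (\<lambda>x. L (f x) (-1))"

definition RPC_pos :: "'a measure \<Rightarrow> real \<Rightarrow> ('a \<Rightarrow> real) \<Rightarrow> ('a \<Rightarrow> real)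
    \<Rightarrow> (real \<Rightarrow> real \<Rightarrow> real) \<Rightarrow> ('a \<Rightarrow> real) \<Rightarrow> real" where
  "RPC_pos M \<pi> pp pn L f =
     expect_dens M (ptilde_pos \<pi> pp pn) (\<lambda>x. L (f x) 1 - \<pi> * L (f x) (-1))"

definition RPC_neg :: "'a measure \<Rightarrow> real \<Rightarrow> ('a \<Rightarrow> real) \<Rightarrow> ('a \<Rightarrow> real)
    \<Rightarrow> (real \<Rightarrow> real \<Rightarrow> real) \<Rightarrow> ('a \<Rightarrow> real) \<Rightarrow> real" where
  "RPC_neg M \<pi> pp pn L f =
     expect_dens M (ptilde_neg \<pi> pp pn) (\<lambda>x. L (f x) (-1) - (1 - \<pi>) * L (f x) 1)"

definition RPC_pos_hat :: "real \<Rightarrow> (real \<Rightarrow> real \<Rightarrow> real) \<Rightarrow> nat \<Rightarrow> (nat \<Rightarrow> 'a)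
    \<Rightarrow> ('a \<Rightarrow> real) \<Rightarrow> real" where
  "RPC_pos_hat \<pi> L n xs f = (1 / real n) * (\<Sum>i=1..n. L (f (xs i)) 1 - \<pi> * L (f (xs i)) (-1))"

definition RPC_neg_hat :: "real \<Rightarrow> (real \<Rightarrow> real \<Rightarrow> real) \<Rightarrow> nat \<Rightarrow> (nat \<Rightarrow> 'a)
    \<Rightarrow> ('a \<Rightarrow> real) \<Rightarrow> real" where
  "RPC_neg_hat \<pi> L n xs' f =
     (1 / real n) * (\<Sum>i=1..n. L (f (xs' i)) (-1) - (1 - \<pi>) * L (f (xs' i)) 1)"

definition is_argmin_on :: "('b \<Rightarrow> real) \<Rightarrow> 'b set \<Rightarrow> 'b \<Rightarrow> bool" where
  "is_argmin_on R F f \<longleftrightarrow> f \<in> F \<and> (\<forall>g\<in>F. R f \<le> R g)"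

end

theory Submission
  imports Defs
begin

text \<open>Both pairwise-comparison densities have the normaliser \<open>1 - \<pi> + \<pi>\<^sup>2\<close>, positive for
  every \<open>\<pi>\<close>, and \<open>\<pi> - \<pi>\<^sup>2 (1 - \<pi>) = \<pi> (1 - \<pi> + \<pi>\<^sup>2)\<close>,
  \<open>(1 - \<pi>) - \<pi> (1 - \<pi>)\<^sup>2 = (1 - \<pi>) (1 - \<pi> + \<pi>\<^sup>2)\<close>. So after expanding the
  pairwise-comparison densities in \<open>pp\<close> and \<open>pn\<close> the cross terms cancel, and the risk is the sum
  of the two pairwise-comparison risks. The bound is then the usual argument for empirical risk
  minimisation: as \<open>fstar\<close> competes with \<open>fhat\<close> for the empirical risk, the excess risk is at
  most the four deviations of the empirical from the true partial risks at \<open>fhat\<close> and \<open>fstar\<close>.\<close>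

lemma pc_normaliser_pos: "0 < 1 - \<pi> + (\<pi>::real)\<^sup>2"
proof -
  have "1 - \<pi> + \<pi>\<^sup>2 = (\<pi> - 1/2)\<^sup>2 + 3/4"
    by (simp add: power2_eq_square algebra_simps)
  then show ?thesis
    using zero_le_power2[of "\<pi> - 1/2"] by linarith
qed

lemma RPC_pos_eq:
  assumes "integrable M (\<lambda>x. L (f x) 1 * pp x)" "integrable M (\<lambda>x. L (f x) (-1) * pp x)"
    and "integrable M (\<lambda>x. L (f x) 1 * pn x)" "integrable M (\<lambda>x. L (f x) (-1) * pn x)"
  shows "RPC_pos M \<pi> pp pn L f =
    (\<pi> * expect_dens M pp (\<lambda>x. L (f x) 1) + (1 - \<pi>)\<^sup>2 * expect_dens M pn (\<lambda>x. L (f x) 1)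
     - \<pi>\<^sup>2 * expect_dens M pp (\<lambda>x. L (f x) (-1))
     - \<pi> * (1 - \<pi>)\<^sup>2 * expect_dens M pn (\<lambda>x. L (f x) (-1))) / (1 - \<pi> + \<pi>\<^sup>2)"
proof -
  have "RPC_pos M \<pi> pp pn L f =
      (\<integral>x. \<pi> * (L (f x) 1 * pp x) + (1 - \<pi>)\<^sup>2 * (L (f x) 1 * pn x)
         - \<pi>\<^sup>2 * (L (f x) (-1) * pp x) - \<pi> * (1 - \<pi>)\<^sup>2 * (L (f x) (-1) * pn x) \<partial>M)
      / (1 - \<pi> + \<pi>\<^sup>2)"
    unfolding RPC_pos_def expect_dens_def ptilde_pos_def integral_divide_zero[symmetric]
    by (intro Bochner_Integration.integral_cong) (simp_all add: power2_eq_square algebra_simps)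
  then show ?thesis
    using assms by (simp add: expect_dens_def)
qed

lemma RPC_neg_eq:
  assumes "integrable M (\<lambda>x. L (f x) 1 * pp x)" "integrable M (\<lambda>x. L (f x) (-1) * pp x)"
    and "integrable M (\<lambda>x. L (f x) 1 * pn x)" "integrable M (\<lambda>x. L (f x) (-1) * pn x)"
  shows "RPC_neg M \<pi> pp pn L f =
    (\<pi>\<^sup>2 * expect_dens M pp (\<lambda>x. L (f x) (-1)) + (1 - \<pi>) * expect_dens M pn (\<lambda>x. L (f x) (-1))
     - \<pi>\<^sup>2 * (1 - \<pi>) * expect_dens M pp (\<lambda>x. L (f x) 1)
     - (1 - \<pi>)\<^sup>2 * expect_dens M pn (\<lambda>x. L (f x) 1)) / (1 - \<pi> + \<pi>\<^sup>2)"
proof -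
  have "RPC_neg M \<pi> pp pn L f =
      (\<integral>x. \<pi>\<^sup>2 * (L (f x) (-1) * pp x) + (1 - \<pi>) * (L (f x) (-1) * pn x)
         - \<pi>\<^sup>2 * (1 - \<pi>) * (L (f x) 1 * pp x) - (1 - \<pi>)\<^sup>2 * (L (f x) 1 * pn x) \<partial>M)
      / (1 - \<pi> + \<pi>\<^sup>2)"
    unfolding RPC_neg_def expect_dens_def ptilde_neg_def integral_divide_zero[symmetric]
    by (intro Bochner_Integration.integral_cong) (simp_all add: power2_eq_square algebra_simps)
  then show ?thesis
    using assms by (simp add: expect_dens_def)
qed

lemma risk_eq_RPC_pos_plus_RPC_neg:
  assumes "\<And>y. y \<in> {1, -1} \<Longrightarrow> integrable M (\<lambda>x. L (f x) y * pp x)"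
    and "\<And>y. y \<in> {1, -1} \<Longrightarrow> integrable M (\<lambda>x. L (f x) y * pn x)"
  shows "risk M \<pi> pp pn L f = RPC_pos M \<pi> pp pn L f + RPC_neg M \<pi> pp pn L f"
proof -
  define A where "A = expect_dens M pp (\<lambda>x. L (f x) 1)"
  define B where "B = expect_dens M pp (\<lambda>x. L (f x) (-1))"
  define C where "C = expect_dens M pn (\<lambda>x. L (f x) 1)"
  define E where "E = expect_dens M pn (\<lambda>x. L (f x) (-1))"
  define D where "D = 1 - \<pi> + \<pi>\<^sup>2"
  have integrable_losses:
      "integrable M (\<lambda>x. L (f x) 1 * pp x)" "integrable M (\<lambda>x. L (f x) (-1) * pp x)"
      "integrable M (\<lambda>x. L (f x) 1 * pn x)" "integrable M (\<lambda>x. L (f x) (-1) * pn x)"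
    using assms by simp_all
  have "D \<noteq> 0"
    using pc_normaliser_pos[of \<pi>] unfolding D_def by simp
  have "RPC_pos M \<pi> pp pn L f + RPC_neg M \<pi> pp pn L f
      = (\<pi> * A + (1 - \<pi>)\<^sup>2 * C - \<pi>\<^sup>2 * B - \<pi> * (1 - \<pi>)\<^sup>2 * E) / D
        + (\<pi>\<^sup>2 * B + (1 - \<pi>) * E - \<pi>\<^sup>2 * (1 - \<pi>) * A - (1 - \<pi>)\<^sup>2 * C) / D"
    unfolding RPC_pos_eq[OF integrable_losses] RPC_neg_eq[OF integrable_losses] A_def B_def C_def E_def D_def ..
  also have "\<dots> = ((\<pi> - \<pi>\<^sup>2 * (1 - \<pi>)) * A + ((1 - \<pi>) - \<pi> * (1 - \<pi>)\<^sup>2) * E) / D"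
    unfolding add_divide_distrib[symmetric] by (simp add: algebra_simps)
  also have "\<dots> = \<pi> * A + (1 - \<pi>) * E"
    using \<open>D \<noteq> 0\<close> unfolding D_def by (simp add: field_simps power2_eq_square)
  finally show ?thesis
    unfolding risk_def A_def E_def by simp
qed

lemma erm_excess_risk_le_twice_sup_deviations:
  fixes R R\<^sub>1 R\<^sub>2 R\<^sub>1' R\<^sub>2' :: "'b \<Rightarrow> real"
  assumes decomp: "\<And>f. f \<in> F \<Longrightarrow> R f = R\<^sub>1 f + R\<^sub>2 f"
    and fhat: "is_argmin_on (\<lambda>f. R\<^sub>1' f + R\<^sub>2' f) F fhat"
    and fstar: "fstar \<in> F"
  shows "ereal (R fhat - R fstar)
     \<le> 2 * (SUP f\<in>F. ereal \<bar>R\<^sub>1 f - R\<^sub>1' f\<bar>) + 2 * (SUP f\<in>F. ereal \<bar>R\<^sub>2 f - R\<^sub>2' f\<bar>)"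
proof -
  define S\<^sub>1 where "S\<^sub>1 = (SUP f\<in>F. ereal \<bar>R\<^sub>1 f - R\<^sub>1' f\<bar>)"
  define S\<^sub>2 where "S\<^sub>2 = (SUP f\<in>F. ereal \<bar>R\<^sub>2 f - R\<^sub>2' f\<bar>)"
  have "fhat \<in> F" and "R\<^sub>1' fhat + R\<^sub>2' fhat \<le> R\<^sub>1' fstar + R\<^sub>2' fstar"
    using fhat fstar unfolding is_argmin_on_def by auto
  then have "R fhat - R fstar
      \<le> (\<bar>R\<^sub>1 fhat - R\<^sub>1' fhat\<bar> + \<bar>R\<^sub>1 fstar - R\<^sub>1' fstar\<bar>)
        + (\<bar>R\<^sub>2 fhat - R\<^sub>2' fhat\<bar> + \<bar>R\<^sub>2 fstar - R\<^sub>2' fstar\<bar>)"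
    using decomp fstar by fastforce
  then have "ereal (R fhat - R fstar)
      \<le> (ereal \<bar>R\<^sub>1 fhat - R\<^sub>1' fhat\<bar> + ereal \<bar>R\<^sub>1 fstar - R\<^sub>1' fstar\<bar>)
        + (ereal \<bar>R\<^sub>2 fhat - R\<^sub>2' fhat\<bar> + ereal \<bar>R\<^sub>2 fstar - R\<^sub>2' fstar\<bar>)"
    by simp
  also have "\<dots> \<le> (S\<^sub>1 + S\<^sub>1) + (S\<^sub>2 + S\<^sub>2)"
    unfolding S\<^sub>1_def S\<^sub>2_def using \<open>fhat \<in> F\<close> fstar by (intro add_mono SUP_upper)
  also have "\<dots> = 2 * S\<^sub>1 + 2 * S\<^sub>2"
    using mult_2_ereal[of S\<^sub>1] mult_2_ereal[of S\<^sub>2] by simp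
  finally show ?thesis
    unfolding S\<^sub>1_def S\<^sub>2_def .
qed

theorem lemma2:
  fixes M :: "'a measure" and \<pi> :: real and pp pn :: "'a \<Rightarrow> real"
    and L :: "real \<Rightarrow> real \<Rightarrow> real" and F :: "('a \<Rightarrow> real) set"
    and n :: nat and xs xs' :: "nat \<Rightarrow> 'a" and fhat fstar :: "'a \<Rightarrow> real"
  assumes "0 < \<pi>" "\<pi> < 1"
    and "is_density M pp" "is_density M pn"
    and "\<And>z y. 0 \<le> L z y"
    and "\<And>f y. f \<in> F \<Longrightarrow> y \<in> {1, -1} \<Longrightarrow> integrable M (\<lambda>x. L (f x) y * pp x)"
    and "\<And>f y. f \<in> F \<Longrightarrow> y \<in> {1, -1} \<Longrightarrow> integrable M (\<lambda>x. L (f x) y * pn x)"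
    and "0 < n"
    and "\<And>i. i \<in> {1..n} \<Longrightarrow> xs i \<in> space M"
    and "\<And>i. i \<in> {1..n} \<Longrightarrow> xs' i \<in> space M"
    and "is_argmin_on (\<lambda>f. RPC_pos_hat \<pi> L n xs f + RPC_neg_hat \<pi> L n xs' f) F fhat"
    and "is_argmin_on (risk M \<pi> pp pn L) F fstar"
  shows "ereal (risk M \<pi> pp pn L fhat - risk M \<pi> pp pn L fstar)
     \<le> 2 * (SUP f\<in>F. ereal \<bar>RPC_pos M \<pi> pp pn L f - RPC_pos_hat \<pi> L n xs f\<bar>)
       + 2 * (SUP f\<in>F. ereal \<bar>RPC_neg M \<pi> pp pn L f - RPC_neg_hat \<pi> L n xs' f\<bar>)"
proof -
  have "fstar \<in> F"
    using assms(12) unfolding is_argmin_on_def by simp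
  moreover have "risk M \<pi> pp pn L f = RPC_pos M \<pi> pp pn L f + RPC_neg M \<pi> pp pn L f"
    if "f \<in> F" for f
    using risk_eq_RPC_pos_plus_RPC_neg assms(6,7)[OF that] by blast
  ultimately show ?thesis
    using erm_excess_risk_le_twice_sup_deviations[where R = "risk M \<pi> pp pn L"] assms(11)
    by blast
qed

end
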